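(* In the setting of the context (with $p>L$), for all $x\in X$, $y\in Y$, $z\in\mathbb{R}^n$ we have $\phi(x,y,z)\ge\underline{f}$.
   Context: $X\subseteq\mathbb{R}^n$ nonempty closed convex, $Y\subseteq\mathbb{R}^m$ nonempty closed convex compact, $f$ continuously differentiable with $f(x,\cdot)$ concave, $\nabla_xf,\nabla_yf$ $L$-Lipschitz, and $\psi(x)=\max_{y\in Y}f(x,y)\ge\underline{f}$ for all $x\in X$, with $\underline{f}$ finite. $K(x,z;y)=f(x,y)+\frac p2\|x-z\|^2$; $d(y,z)=\min_{x\in X}K(x,z;y)$; $P(z)=\min_{x\in X}\max_{y\in Y}K(x,z;y)$; $\phi(x,y,z)=K(x,z;y)-2d(y,z)+2P(z)$. *)

theory Defs
  imports "HOL-Analysis.Analysis"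
begin

definition Kfun :: "('a::euclidean_space \<Rightarrow> 'b::euclidean_space \<Rightarrow> real) \<Rightarrow> real \<Rightarrow> 'a \<Rightarrow> 'a \<Rightarrow> 'b \<Rightarrow> real"
  where "Kfun f p x z y = f x y + p / 2 * (norm (x - z))\<^sup>2"

definition dfun :: "('a::euclidean_space \<Rightarrow> 'b::euclidean_space \<Rightarrow> real) \<Rightarrow> real \<Rightarrow> 'a set \<Rightarrow> 'b \<Rightarrow> 'a \<Rightarrow> real"
  where "dfun f p X y z = (INF x\<in>X. Kfun f p x z y)"

definition Pfun :: "('a::euclidean_space \<Rightarrow> 'b::euclidean_space \<Rightarrow> real) \<Rightarrow> real \<Rightarrow> 'a set \<Rightarrow> 'b set \<Rightarrow> 'a \<Rightarrow> real"
  where "Pfun f p X Y z = (INF x\<in>X. SUP y\<in>Y. Kfun f p x z y)"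

definition phifun :: "('a::euclidean_space \<Rightarrow> 'b::euclidean_space \<Rightarrow> real) \<Rightarrow> real \<Rightarrow> 'a set \<Rightarrow> 'b set \<Rightarrow> 'a \<Rightarrow> 'b \<Rightarrow> 'a \<Rightarrow> real"
  where "phifun f p X Y x y z = Kfun f p x z y - 2 * dfun f p X y z + 2 * Pfun f p X Y z"

end

theory Submission imports Defs begin

text \<open>Split \<open>\<phi> = (K - d) + (P - d) + P\<close>. Since \<open>d(y,z)\<close> is the infimum of \<open>K(\<cdot>,z;y)\<close>
  over \<open>X\<close>, and \<open>K(u,z;y) \<le> max\<^sub>Y K(u,z;\<cdot>)\<close>, the first two summands are nonnegative; and
  \<open>P(z) \<ge> min\<^sub>X max\<^sub>Y f \<ge> flow\<close> because \<open>p > L \<ge> 0\<close>. The hypothesis \<open>p > L\<close> is also what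
  makes the infima meaningful (an \<open>INF\<close> of a set unbounded below is a junk value): by the
  descent lemma, \<open>K(\<cdot>,z;y)\<close> is bounded below by a quadratic with leading coefficient
  \<open>(p - L)/2 > 0\<close>.\<close>

lemma has_derivative_partial_fst:
  assumes "((\<lambda>(u, v). f u v) has_derivative D) (at (x, y))"
  shows "((\<lambda>u. f u y) has_derivative (\<lambda>h. D (h, 0))) (at x)"
proof -
  have "((\<lambda>u. (u, y)) has_derivative (\<lambda>h. (h, 0))) (at x)"
    by (auto intro!: derivative_eq_intros)
  from has_derivative_compose[OF this assms] show ?thesis by simp
qed

lemma has_derivative_partial_snd:
  assumes "((\<lambda>(u, v). f u v) has_derivative D) (at (x, y))"
  shows "((\<lambda>v. f x v) has_derivative (\<lambda>k. D (0, k))) (at y)"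
proof -
  have "((\<lambda>v. (x, v)) has_derivative (\<lambda>k. (0, k))) (at y)"
    by (auto intro!: derivative_eq_intros)
  from has_derivative_compose[OF this assms] show ?thesis by simp
qed

lemma lipschitz_on_partial_fst:
  fixes g :: "'a::euclidean_space \<Rightarrow> 'b::real_normed_vector \<Rightarrow> 'c::real_normed_vector"
  assumes "\<And>x y x' y'. norm (g x y - g x' y') \<le> L * norm ((x, y) - (x', y'))"
  shows "L-lipschitz_on UNIV (\<lambda>x. g x y)"
proof (rule lipschitz_onI)
  fix x x' :: 'a
  show "dist (g x y) (g x' y) \<le> L * dist x x'"
    using assms[of x y x' y] by (simp add: dist_norm norm_Pair)
next
  obtain b :: 'a where "b \<in> Basis" using nonempty_Basis by blast
  have "0 \<le> norm (g b y - g 0 y)" by simp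
  also have "\<dots> \<le> L * norm ((b, y) - (0, y))" by (rule assms)
  also have "norm ((b, y) - (0::'a, y)) = 1" using \<open>b \<in> Basis\<close> by (simp add: norm_Pair)
  finally show "0 \<le> L" by simp
qed

text \<open>The descent lemma, lower half: along the segment from \<open>z\<close> to \<open>x\<close>, the function
  \<open>\<phi>(z + t(x - z)) - t \<langle>g z, x - z\<rangle> + L t\<^sup>2 \<parallel>x - z\<parallel>\<^sup>2 / 2\<close> has a nonnegative derivative.\<close>

lemma lipschitz_gradient_lower_bound:
  fixes \<phi> :: "'a::real_inner \<Rightarrow> real"
  assumes deriv: "\<And>u. (\<phi> has_derivative (\<lambda>h. g u \<bullet> h)) (at u)"
    and lip: "L-lipschitz_on UNIV g"
  shows "\<phi> x \<ge> \<phi> z + g z \<bullet> (x - z) - L / 2 * (norm (x - z))\<^sup>2"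
proof -
  define d where "d = x - z"
  define h where "h t = \<phi> (z + t *\<^sub>R d) - t * (g z \<bullet> d) + L / 2 * t\<^sup>2 * (norm d)\<^sup>2" for t
  have h_deriv: "(h has_real_derivative (g (z + t *\<^sub>R d) - g z) \<bullet> d + L * t * (norm d)\<^sup>2) (at t)"
    for t
  proof -
    have "((\<lambda>t. \<phi> (z + t *\<^sub>R d)) has_derivative (\<lambda>s. g (z + t *\<^sub>R d) \<bullet> (s *\<^sub>R d))) (at t)"
      by (rule has_derivative_compose[OF _ deriv]) (auto intro!: derivative_eq_intros)
    then have "((\<lambda>t. \<phi> (z + t *\<^sub>R d)) has_real_derivative g (z + t *\<^sub>R d) \<bullet> d) (at t)"
      by (rule has_derivative_imp_has_field_derivative) simp
    then show ?thesis
      unfolding h_def by (auto intro!: derivative_eq_intros simp: inner_diff_left)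
  qed
  have h_deriv_nonneg: "(g (z + t *\<^sub>R d) - g z) \<bullet> d + L * t * (norm d)\<^sup>2 \<ge> 0" if "0 \<le> t" for t
  proof -
    have "- ((g (z + t *\<^sub>R d) - g z) \<bullet> d) \<le> norm (g (z + t *\<^sub>R d) - g z) * norm d"
      by (metis Cauchy_Schwarz_ineq2 abs_le_iff inner_commute)
    also have "\<dots> \<le> L * norm (t *\<^sub>R d) * norm d"
      using lipschitz_on_normD[OF lip, of "z + t *\<^sub>R d" z] by (simp add: mult_right_mono)
    finally show ?thesis using that by (simp add: power2_eq_square algebra_simps)
  qed
  have "h 0 \<le> h 1"
    by (rule DERIV_nonneg_imp_nondecreasing[of 0 1]) (use h_deriv h_deriv_nonneg in auto)
  then show ?thesis unfolding h_def d_def by simp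
qed

lemma half_square_minus_linear_ge:
  fixes c a r :: real
  assumes "c > 0"
  shows "c / 2 * r\<^sup>2 - a * r \<ge> - (a\<^sup>2 / (2 * c))"
proof -
  have "0 \<le> (c * r - a)\<^sup>2" by simp
  then have "- (a\<^sup>2 / 2) \<le> c * (c / 2 * r\<^sup>2 - a * r)"
    by (simp add: power2_eq_square algebra_simps)
  then show ?thesis using assms by (simp add: field_simps)
qed

lemma proximal_term_lower_bound:
  fixes \<phi> :: "'a::real_inner \<Rightarrow> real"
  assumes "\<And>u. (\<phi> has_derivative (\<lambda>h. g u \<bullet> h)) (at u)"
    and "L-lipschitz_on UNIV g" and "L < p"
  shows "\<phi> u + p / 2 * (norm (u - z))\<^sup>2 \<ge> \<phi> z - (norm (g z))\<^sup>2 / (2 * (p - L))"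
proof -
  have "\<phi> u \<ge> \<phi> z + g z \<bullet> (u - z) - L / 2 * (norm (u - z))\<^sup>2"
    by (rule lipschitz_gradient_lower_bound[OF assms(1,2)])
  moreover have "g z \<bullet> (u - z) \<ge> - (norm (g z) * norm (u - z))"
    using Cauchy_Schwarz_ineq2[of "g z" "u - z"] by (auto simp: abs_le_iff)
  moreover have "(p - L) / 2 * (norm (u - z))\<^sup>2 - norm (g z) * norm (u - z)
      \<ge> - ((norm (g z))\<^sup>2 / (2 * (p - L)))"
    by (rule half_square_minus_linear_ge) (use \<open>L < p\<close> in simp)
  ultimately show ?thesis by (simp add: algebra_simps)
qed

lemma cINF_le_cINF_cSUP:
  fixes K :: "'a \<Rightarrow> 'b \<Rightarrow> 'c::conditionally_complete_lattice"
  assumes "X \<noteq> {}" "y \<in> Y" "bdd_below ((\<lambda>u. K u y) ` X)"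
    and "\<And>u. u \<in> X \<Longrightarrow> bdd_above (K u ` Y)"
  shows "(INF u\<in>X. K u y) \<le> (INF u\<in>X. SUP v\<in>Y. K u v)"
  using assms by (intro cINF_mono) (auto intro: cSUP_upper)

theorem lemma3:
  fixes f :: "'a::euclidean_space \<Rightarrow> 'b::euclidean_space \<Rightarrow> real"
    and gx :: "'a \<Rightarrow> 'b \<Rightarrow> 'a" and gy :: "'a \<Rightarrow> 'b \<Rightarrow> 'b"
    and X :: "'a set" and Y :: "'b set" and L p flow :: real
  assumes X: "X \<noteq> {}" "closed X" "convex X"
    and Y: "Y \<noteq> {}" "closed Y" "convex Y" "compact Y"
    and deriv: "\<And>x y. ((\<lambda>(u, v). f u v) has_derivative
                   (\<lambda>(h, k). gx x y \<bullet> h + gy x y \<bullet> k)) (at (x, y))"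
    and cont: "continuous_on UNIV (\<lambda>(u, v). gx u v)" "continuous_on UNIV (\<lambda>(u, v). gy u v)"
    and conc: "\<And>x. concave_on UNIV (f x)"
    and lipx: "\<And>x y x' y'. norm (gx x y - gx x' y') \<le> L * norm ((x, y) - (x', y'))"
    and lipy: "\<And>x y x' y'. norm (gy x y - gy x' y') \<le> L * norm ((x, y) - (x', y'))"
    and lower: "\<And>x. x \<in> X \<Longrightarrow> (SUP y\<in>Y. f x y) \<ge> flow"
    and pL: "p > L"
  shows "\<forall>x\<in>X. \<forall>y\<in>Y. \<forall>z. phifun f p X Y x y z \<ge> flow"
proof (intro ballI allI)
  fix x y z assume "x \<in> X" "y \<in> Y"
  have lip: "L-lipschitz_on UNIV (\<lambda>u. gx u y)" by (rule lipschitz_on_partial_fst[OF lipx])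
  have "p \<ge> 0" using lipschitz_on_nonneg[OF lip] pL by linarith
  have partial_x: "((\<lambda>u. f u y) has_derivative (\<lambda>h. gx u y \<bullet> h)) (at u)" for u
    using has_derivative_partial_fst[OF deriv] by simp
  have "bdd_below ((\<lambda>u. Kfun f p u z y) ` X)"
    using proximal_term_lower_bound[OF partial_x lip pL, of z]
    unfolding Kfun_def by (rule bdd_belowI2)
  moreover have bdd_Y: "bdd_above ((\<lambda>v. Kfun f p u z v) ` Y)" for u
  proof -
    have "continuous_on Y (f u)"
      by (meson continuous_at_imp_continuous_on has_derivative_continuous
          has_derivative_partial_snd[OF deriv])
    then have "continuous_on Y (\<lambda>v. Kfun f p u z v)" unfolding Kfun_def by (intro continuous_intros)
    then show ?thesis by (intro bounded_imp_bdd_above compact_imp_bounded compact_continuous_image Y(4))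
  qed
  ultimately have "dfun f p X y z \<le> Kfun f p x z y" and "dfun f p X y z \<le> Pfun f p X Y z"
    unfolding dfun_def Pfun_def using \<open>x \<in> X\<close> \<open>y \<in> Y\<close> X(1) by (auto intro: cINF_lower cINF_le_cINF_cSUP)
  moreover have "flow \<le> Pfun f p X Y z"
    unfolding Pfun_def
  proof (rule cINF_greatest[OF X(1)])
    fix u assume "u \<in> X"
    have "(SUP v\<in>Y. f u v) \<le> (SUP v\<in>Y. Kfun f p u z v)"
      using \<open>p \<ge> 0\<close> bdd_Y Y(1) by (intro cSUP_mono) (fastforce simp: Kfun_def)+
    then show "flow \<le> (SUP v\<in>Y. Kfun f p u z v)" using lower[OF \<open>u \<in> X\<close>] by linarith
  qed
  ultimately show "flow \<le> phifun f p X Y x y z" unfolding phifun_def by linarith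
qed

end
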